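(* Let $G$ be a finite graph with $n$ vertices and $t$ a positive integer with prime factorization $t=\prod_{i=1}^s p_i^{r_i}$. Write $Z_t\times Z_2=\{(\rho^i,\sigma^j): 0\le i\le t-1,\ j\in\{0,1\}\}$ (with $\rho$ of order $t$, $\sigma$ of order 2) and $D_t\times Z_2=\{(\rho^i,\sigma^j),(\tau\rho^i,\sigma^j): 0\le i\le t-1,\ j\in\{0,1\}\}$ (with $\rho,\tau$ the rotation and reflection generating $D_t$), and when $\mathrm{Aut}(G)$ is isomorphic to one of these groups denote by $\pi_g$ the automorphism corresponding to the group element $g$. Let $P_0^*=\{\pi_{(\rho^0,\sigma)}\}$ if $t$ is odd and $P_0^*=\{\pi_{(\rho^0,\sigma)},\pi_{(\rho^{t/2},\sigma)}\}$ if $t$ is even, and let $P^*=P_0^*\cup\{\pi_{(\rho^{t/p_i},\sigma^0)}: i=1,\dots,s\}$. Then for every positive integer $k$: (i) if $\mathrm{Aut}(G)\cong Z_t\times Z_2$, then $L(G,k)=\sum_{P\subseteq P^*}(-1)^{|P|}N_{\ge}(P)$; (ii) if $\mathrm{Aut}(G)\cong D_t\times Z_2$, then for $b\in\{0,1\}$ and $0\le i\le t-1$, $$N_=(\{\pi_{(\rho^0,\sigma^0)},\pi_{(\tau\rho^i,\sigma^b)}\})=\sum_{\{\pi_{(\tau\rho^i,\sigma^b)}\}\subseteq P\subseteq\{\pi_{(\tau\rho^i,\sigma^b)}\}\cup P^*}(-1)^{|P|-1}N_{\ge}(P),$$ and $$L(G,k)=\sum_{P\subseteq P^*}(-1)^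{|P|}N_{\ge}(P)-\sum_{b=0}^{1}\sum_{i=0}^{t-1}N_=(\{\pi_{(\rho^0,\sigma^0)},\pi_{(\tau\rho^i,\sigma^b)}\}).$$
   Context: A $k$-labeling of $G$ is a map $\phi:V(G)\to\{1,\dots,k\}$; an automorphism $\pi$ preserves $\phi$ if $\phi(\pi(v))=\phi(v)$ for all $v$; $\phi$ is distinguishing if only the identity preserves it; $L(G,k)$ is the number of distinguishing $k$-labelings. For $P\subseteq\mathrm{Aut}(G)$, $N_{\ge}(P)$ is the number of $k$-labelings preserved by every automorphism in $P$ (so $N_{\ge}(\emptyset)=k^n$), and $N_=(P)$ is the number of $k$-labelings whose set of preserving automorphisms is exactly $P$. *)

theory Defs
  imports "HOL-Library.FuncSet" "HOL-Computational_Algebra.Primes"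
begin

definition is_graph :: "'a set \<Rightarrow> ('a \<Rightarrow> 'a \<Rightarrow> bool) \<Rightarrow> bool" where
  "is_graph V E \<longleftrightarrow> finite V \<and> (\<forall>x y. E x y \<longrightarrow> E y x) \<and> (\<forall>x. \<not> E x x)
     \<and> (\<forall>x y. E x y \<longrightarrow> x \<in> V \<and> y \<in> V)"

definition auts :: "'a set \<Rightarrow> ('a \<Rightarrow> 'a \<Rightarrow> bool) \<Rightarrow> ('a \<Rightarrow> 'a) set" where
  "auts V E = {f. bij_betw f V V \<and> (\<forall>x. x \<notin> V \<longrightarrow> f x = x)
                 \<and> (\<forall>x\<in>V. \<forall>y\<in>V. E x y \<longleftrightarrow> E (f x) (f y))}"

definition labelings :: "'a set \<Rightarrow> nat \<Rightarrow> ('a \<Rightarrow> nat) set" where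
  "labelings V k = V \<rightarrow>\<^sub>E {1..k}"

definition preserves :: "'a set \<Rightarrow> ('a \<Rightarrow> 'a) \<Rightarrow> ('a \<Rightarrow> nat) \<Rightarrow> bool" where
  "preserves V f \<phi> \<longleftrightarrow> (\<forall>v\<in>V. \<phi> (f v) = \<phi> v)"

definition distinguishing :: "'a set \<Rightarrow> ('a \<Rightarrow> 'a \<Rightarrow> bool) \<Rightarrow> ('a \<Rightarrow> nat) \<Rightarrow> bool" where
  "distinguishing V E \<phi> \<longleftrightarrow> (\<forall>f\<in>auts V E. preserves V f \<phi> \<longrightarrow> f = id)"

definition Lcount :: "'a set \<Rightarrow> ('a \<Rightarrow> 'a \<Rightarrow> bool) \<Rightarrow> nat \<Rightarrow> nat" where
  "Lcount V E k = card {\<phi> \<in> labelings V k. distinguishing V E \<phi>}"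

definition Nge :: "'a set \<Rightarrow> nat \<Rightarrow> ('a \<Rightarrow> 'a) set \<Rightarrow> nat" where
  "Nge V k P = card {\<phi> \<in> labelings V k. \<forall>f\<in>P. preserves V f \<phi>}"

definition Neq :: "'a set \<Rightarrow> ('a \<Rightarrow> 'a \<Rightarrow> bool) \<Rightarrow> nat \<Rightarrow> ('a \<Rightarrow> 'a) set \<Rightarrow> nat" where
  "Neq V E k P = card {\<phi> \<in> labelings V k. {f \<in> auts V E. preserves V f \<phi>} = P}"

text \<open>pi i j = automorphism corresponding to (rho^i, sigma^j) under an isomorphism
  Z_t x Z_2 -> Aut(G) (group law of Aut(G) = composition).\<close>
definition cyc2_iso :: "'a set \<Rightarrow> ('a \<Rightarrow> 'a \<Rightarrow> bool) \<Rightarrow> nat \<Rightarrow> (nat \<Rightarrow> nat \<Rightarrow> 'a \<Rightarrow> 'a) \<Rightarrow> bool" where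
  "cyc2_iso V E t \<pi> \<longleftrightarrow>
     bij_betw (\<lambda>(i, j). \<pi> i j) ({..<t} \<times> {..<2}) (auts V E) \<and>
     (\<forall>i<t. \<forall>j<2. \<forall>i'<t. \<forall>j'<2.
        \<pi> i j \<circ> \<pi> i' j' = \<pi> ((i + i') mod t) ((j + j') mod 2))"

text \<open>pi a i j = automorphism corresponding to (tau^a rho^i, sigma^j) (a = True means tau present)
  under an isomorphism D_t x Z_2 -> Aut(G); rho^i tau = tau rho^(-i).\<close>
definition dih2_iso :: "'a set \<Rightarrow> ('a \<Rightarrow> 'a \<Rightarrow> bool) \<Rightarrow> nat \<Rightarrow> (bool \<Rightarrow> nat \<Rightarrow> nat \<Rightarrow> 'a \<Rightarrow> 'a) \<Rightarrow> bool" where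
  "dih2_iso V E t \<pi> \<longleftrightarrow>
     bij_betw (\<lambda>(a, i, j). \<pi> a i j) (UNIV \<times> {..<t} \<times> {..<2}) (auts V E) \<and>
     (\<forall>a b. \<forall>i<t. \<forall>j<2. \<forall>i'<t. \<forall>j'<2.
        \<pi> a i j \<circ> \<pi> b i' j' =
          \<pi> (a \<noteq> b) (((if b then t - i else i) + i') mod t) ((j + j') mod 2))"

definition Pstar_cyc :: "nat \<Rightarrow> (nat \<Rightarrow> nat \<Rightarrow> 'b) \<Rightarrow> 'b set" where
  "Pstar_cyc t \<pi> = (if odd t then {\<pi> 0 1} else {\<pi> 0 1, \<pi> (t div 2) 1})
      \<union> {\<pi> (t div p) 0 | p. prime p \<and> p dvd t}"

definition Pstar_dih :: "nat \<Rightarrow> (bool \<Rightarrow> nat \<Rightarrow> nat \<Rightarrow> 'b) \<Rightarrow> 'b set" where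
  "Pstar_dih t \<pi> = Pstar_cyc t (\<pi> False)"

end

theory Submission
  imports Defs
begin

text \<open>
  The automorphisms preserving a labeling form a subgroup, its stabilizer. Every nontrivial
  subgroup of \<open>Z\<^sub>t \<times> Z\<^sub>2\<close> contains an element of \<open>P\<^sup>*\<close>. Indeed, if it contains \<open>(\<rho>^i, \<sigma>)\<close> then for
  odd \<open>t\<close> its \<open>t\<close>-th power is \<open>(\<rho>^0, \<sigma>)\<close>, and for even \<open>t\<close> its square \<open>(\<rho>^2i, \<sigma>^0)\<close> is either
  trivial, i.e. \<open>i \<in> {0, t/2}\<close>, or a nontrivial rotation; and a nontrivial \<open>(\<rho>^i, \<sigma>^0)\<close> has the
  power \<open>(\<rho>^(t/p), \<sigma>^0)\<close> for every prime \<open>p\<close> dividing \<open>t / gcd(i, t)\<close>. Hence, when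
  \<open>Aut(G) \<cong> Z\<^sub>t \<times> Z\<^sub>2\<close>, a labeling is distinguishing iff no element of \<open>P\<^sup>*\<close> preserves it, and (i) is
  inclusion-exclusion over \<open>P\<^sup>*\<close>.

  When \<open>Aut(G) \<cong> D\<^sub>t \<times> Z\<^sub>2\<close>, the elements \<open>(\<rho>^i, \<sigma>^j)\<close> form a copy of \<open>Z\<^sub>t \<times> Z\<^sub>2\<close> containing \<open>P\<^sup>*\<close>.
  If no element of \<open>P\<^sup>*\<close> preserves a labeling, its stabilizer meets this copy trivially; as the
  product of two reflections lies in it, the stabilizer is trivial or \<open>{1, (\<tau>\<rho>^i, \<sigma>^b)}\<close>. Sorting
  these labelings by their stabilizer gives the formula for \<open>L(G, k)\<close>, and inclusion-exclusion over
  \<open>P\<^sup>*\<close> among the labelings preserved by \<open>(\<tau>\<rho>^i, \<sigma>^b)\<close> gives the one for \<open>N\<^sub>=\<close>.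
\<close>

subsection \<open>Inclusion-exclusion\<close>

lemma inclusion_exclusion_avoiding:
  assumes "finite A" "finite S"
  shows "int (card {x\<in>A. \<forall>f\<in>S. \<not> Q f x}) =
         (\<Sum>P\<in>Pow S. (-1) ^ card P * int (card {x\<in>A. \<forall>f\<in>P. Q f x}))"
proof -
  define c where "c X = int (card (A \<inter> X))" for X
  have c_add: "c (X \<union> Y) = c X + c Y" if "disjnt X Y" for X Y
  proof -
    have "A \<inter> (X \<union> Y) = (A \<inter> X) \<union> (A \<inter> Y)" "(A \<inter> X) \<inter> (A \<inter> Y) = {}"
      using that by (auto simp: disjnt_def)
    then show ?thesis unfolding c_def using assms(1) by (simp add: card_Un_disjoint)
  qed
  have union: "c (\<Union>f\<in>S. {x. Q f x}) =
      (\<Sum>P | P \<subseteq> S \<and> P \<noteq> {}. (-1) ^ (card P + 1) * c (\<Inter>f\<in>P. {x. Q f x}))"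
    by (rule Incl_Excl_UN[OF c_add assms(2)])
  have c_Inter: "c (\<Inter>f\<in>P. {x. Q f x}) = int (card {x\<in>A. \<forall>f\<in>P. Q f x})" for P
    unfolding c_def by (rule arg_cong[where f = "\<lambda>X. int (card X)"]) auto
  have "Pow S = insert {} {P. P \<subseteq> S \<and> P \<noteq> {}}" by auto
  then have "(\<Sum>P\<in>Pow S. (-1) ^ card P * int (card {x\<in>A. \<forall>f\<in>P. Q f x}))
      = int (card A) - (\<Sum>P | P \<subseteq> S \<and> P \<noteq> {}. (-1) ^ (card P + 1) * c (\<Inter>f\<in>P. {x. Q f x}))"
    using assms(2) by (simp add: c_Inter sum_negf[symmetric])
  also have "\<dots> = int (card A) - c (\<Union>f\<in>S. {x. Q f x})" by (simp only: union)
  also have "\<dots> = int (card {x\<in>A. \<forall>f\<in>S. \<not> Q f x})"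
  proof -
    have "{x\<in>A. \<forall>f\<in>S. \<not> Q f x} = A - A \<inter> (\<Union>f\<in>S. {x. Q f x})" by auto
    then show ?thesis unfolding c_def using assms(1) by (simp add: card_Diff_subset of_nat_diff card_mono)
  qed
  finally show ?thesis ..
qed

lemma card_filter_eq_sum_card_fibres:
  assumes "finite A" "finite T"
  shows "card {x\<in>A. s x \<in> T} = (\<Sum>H\<in>T. card {x\<in>A. s x = H})"
proof -
  have "card {x\<in>A. s x \<in> T} = card (\<Union>H\<in>T. {x\<in>A. s x = H})"
    by (rule arg_cong[where f = card]) auto
  also have "\<dots> = (\<Sum>H\<in>T. card {x\<in>A. s x = H})"
    by (rule card_UN_disjoint) (use assms in auto)
  finally show ?thesis .
qed

lemma sum_supersets_insert:
  assumes "g \<notin> S"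
  shows "(\<Sum>P\<in>{P. {g} \<subseteq> P \<and> P \<subseteq> {g} \<union> S}. h P) = (\<Sum>Q\<in>Pow S. h (insert g Q))"
proof -
  have "{P. {g} \<subseteq> P \<and> P \<subseteq> {g} \<union> S} = insert g ` Pow S"
    by (auto intro!: image_eqI[where x = "P - {g}" for P])
  moreover have "inj_on (insert g) (Pow S)"
    using assms by (auto intro!: inj_onI simp: insert_ident)
  ultimately show ?thesis by (simp add: sum.reindex)
qed

subsection \<open>Subsets of \<open>Z\<^sub>t \<times> Z\<^sub>2\<close> closed under addition\<close>

definition add_closed_mod :: "nat \<Rightarrow> (nat \<Rightarrow> nat \<Rightarrow> bool) \<Rightarrow> bool" where
  "add_closed_mod t S \<longleftrightarrow>
     (\<forall>i<t. \<forall>j<2. \<forall>i'<t. \<forall>j'<2. S i j \<longrightarrow> S i' j' \<longrightarrow> S ((i + i') mod t) ((j + j') mod 2))"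

lemma add_closed_mod_multiples:
  assumes "t > 0"
    and closed: "add_closed_mod t S"
    and "S 0 0" "S i j" "i < t" "j < 2"
  shows "S ((n * i) mod t) ((n * j) mod 2)"
proof (induction n)
  case (Suc n)
  have "S ((i + (n * i) mod t) mod t) ((j + (n * j) mod 2) mod 2)"
    using closed[unfolded add_closed_mod_def, rule_format, OF \<open>i < t\<close> \<open>j < 2\<close> _ _ \<open>S i j\<close> Suc] \<open>t > 0\<close>
    by simp
  then show ?case by (simp add: mod_add_right_eq)
qed (use \<open>S 0 0\<close> in simp)

lemma add_closed_mod_prime_index:
  assumes "t > 0"
    and closed: "add_closed_mod t S"
    and "S 0 0" "S i 0" "0 < i" "i < t"
  shows "\<exists>p. prime p \<and> p dvd t \<and> S (t div p) 0"
proof -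
  define g where "g = gcd i t"
  obtain x y where bezout: "i * x = t * y + g"
    using bezout_nat[of i t] \<open>0 < i\<close> unfolding g_def by auto
  obtain q where q: "t = g * q" unfolding g_def by (metis gcd_dvd2 dvdE)
  have "g \<le> i" unfolding g_def using \<open>0 < i\<close> by simp
  then have "q \<noteq> 1" using q \<open>i < t\<close> by auto
  then obtain p r where p: "prime p" and r: "q = p * r"
    using prime_factor_nat by (metis dvdE)
  have t_div_p: "t div p = g * r" and "t div p < t"
    using q r p \<open>t > 0\<close> prime_gt_1_nat by auto
  \<comment> \<open>\<open>x\<close> inverts \<open>i / g\<close> modulo \<open>t / g\<close>, so \<open>x r i \<equiv> g r = t / p\<close> modulo \<open>t\<close>.\<close>
  have "(x * r * i) mod t = t div p"
  proof -
    have "x * r * i = (i * x) * r" by (simp add: ac_simps)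
    also have "\<dots> = t * (y * r) + t div p" using bezout t_div_p by (simp add: algebra_simps)
    finally have "x * r * i = t * (y * r) + t div p" .
    then show ?thesis using \<open>t div p < t\<close> by simp
  qed
  moreover have "S ((x * r * i) mod t) ((x * r * 0) mod 2)"
    using add_closed_mod_multiples[OF \<open>t > 0\<close> closed \<open>S 0 0\<close> \<open>S i 0\<close> \<open>i < t\<close>] by simp
  ultimately have "S (t div p) 0" by simp
  moreover have "p dvd t" using q r by simp
  ultimately show ?thesis using p by blast
qed

lemma add_closed_mod_nontrivial_meets_Pstar:
  assumes "t > 0"
    and closed: "add_closed_mod t S"
    and "S 0 0" "S i j" "i < t" "j < 2" "(i, j) \<noteq> (0, 0)"
  shows "S 0 1 \<or> (even t \<and> S (t div 2) 1) \<or> (\<exists>p. prime p \<and> p dvd t \<and> S (t div p) 0)"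
proof -
  note multiples = add_closed_mod_multiples[OF \<open>t > 0\<close> closed \<open>S 0 0\<close> \<open>S i j\<close> \<open>i < t\<close> \<open>j < 2\<close>]
  note prime_index = add_closed_mod_prime_index[OF \<open>t > 0\<close> closed \<open>S 0 0\<close>]
  consider "j = 0" | "j = 1" "odd t" | "j = 1" "even t"
    using \<open>j < 2\<close> by linarith
  then show ?thesis
  proof cases
    case 1
    then show ?thesis using prime_index \<open>S i j\<close> assms(5,7) by auto
  next
    case 2
    then show ?thesis using multiples[of t] by (simp add: odd_iff_mod_2_eq_one)
  next
    case 3
    show ?thesis
    proof (cases "(2 * i) mod t = 0")
      case True
      then obtain c where c: "2 * i = t * c" by (metis mod_0_imp_dvd dvdE)
      with \<open>i < t\<close> have "t * c < t * 2" by linarith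
      then have "c = 0 \<or> c = 1" by (simp add: less_2_cases_iff)
      then have "i = 0 \<or> i = t div 2" using c by auto
      then show ?thesis using \<open>S i j\<close> 3 by auto
    next
      case False
      then show ?thesis using prime_index multiples[of 2] \<open>t > 0\<close> 3 by auto
    qed
  qed
qed

lemma mod_neg_add_eq_0_iff:
  fixes i i' t :: nat
  assumes "i < t" "i' < t"
  shows "(t - i' + i) mod t = 0 \<longleftrightarrow> i = i'"
proof (cases "i' \<le> i")
  case True
  then have "t - i' + i = (i - i') + t" using assms by simp
  then have "(t - i' + i) mod t = i - i'"
    using assms by (metis mod_add_self2 mod_less less_imp_diff_less)
  then show ?thesis using True by auto
next
  case False
  then show ?thesis using assms by simp
qed

lemma id_in_auts: "id \<in> auts V E"
  unfolding auts_def by auto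

lemma auts_closed: "f \<in> auts V E \<Longrightarrow> x \<in> V \<Longrightarrow> f x \<in> V"
  unfolding auts_def bij_betw_def by auto

lemma auts_inj:
  assumes "f \<in> auts V E"
  shows "inj f"
proof (rule injI)
  fix x y assume "f x = f y"
  have bij: "bij_betw f V V" and fixed: "\<And>x. x \<notin> V \<Longrightarrow> f x = x"
    using assms unfolding auts_def by auto
  show "x = y"
    using \<open>f x = f y\<close> bij_betw_apply[OF bij] bij_betw_imp_inj_on[OF bij] fixed
    by (cases "x \<in> V"; cases "y \<in> V") (auto dest: inj_onD)
qed

lemma auts_idempotent_eq_id:
  assumes "f \<in> auts V E" "f \<circ> f = f"
  shows "f = id"
proof
  fix x
  have "f (f x) = f x" using assms(2) by (metis comp_apply)
  then show "f x = id x" using auts_inj[OF assms(1)] by (simp add: inj_eq)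
qed

lemma preserves_id: "preserves V id \<phi>"
  unfolding preserves_def by simp

lemma preserves_comp:
  "preserves V f \<phi> \<Longrightarrow> preserves V g \<phi> \<Longrightarrow> g \<in> auts V E \<Longrightarrow> preserves V (f \<circ> g) \<phi>"
  unfolding preserves_def using auts_closed by fastforce

lemma finite_labelings: "is_graph V E \<Longrightarrow> finite (labelings V k)"
  unfolding labelings_def is_graph_def by (intro finite_PiE) auto

definition stabilizer :: "'a set \<Rightarrow> ('a \<Rightarrow> 'a \<Rightarrow> bool) \<Rightarrow> ('a \<Rightarrow> nat) \<Rightarrow> ('a \<Rightarrow> 'a) set" where
  "stabilizer V E \<phi> = {f \<in> auts V E. preserves V f \<phi>}"

lemma distinguishing_iff_stabilizer: "distinguishing V E \<phi> \<longleftrightarrow> stabilizer V E \<phi> = {id}"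
  unfolding distinguishing_def stabilizer_def using id_in_auts preserves_id by blast

lemma Neq_eq_card_stabilizer: "Neq V E k P = card {\<phi> \<in> labelings V k. stabilizer V E \<phi> = P}"
  unfolding Neq_def stabilizer_def ..

definition cyc2_embedding :: "'a set \<Rightarrow> ('a \<Rightarrow> 'a \<Rightarrow> bool) \<Rightarrow> nat \<Rightarrow> (nat \<Rightarrow> nat \<Rightarrow> 'a \<Rightarrow> 'a) \<Rightarrow> bool" where
  "cyc2_embedding V E t \<rho> \<longleftrightarrow>
     (\<forall>i<t. \<forall>j<2. \<rho> i j \<in> auts V E) \<and> inj_on (\<lambda>(i, j). \<rho> i j) ({..<t} \<times> {..<2}) \<and>
     (\<forall>i<t. \<forall>j<2. \<forall>i'<t. \<forall>j'<2. \<rho> i j \<circ> \<rho> i' j' = \<rho> ((i + i') mod t) ((j + j') mod 2))"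

lemma cyc2_embeddingD:
  assumes "cyc2_embedding V E t \<rho>" "i < t" "j < 2"
  shows "\<rho> i j \<in> auts V E"
    and "i' < t \<Longrightarrow> j' < 2 \<Longrightarrow> \<rho> i j \<circ> \<rho> i' j' = \<rho> ((i + i') mod t) ((j + j') mod 2)"
    and "i' < t \<Longrightarrow> j' < 2 \<Longrightarrow> \<rho> i j = \<rho> i' j' \<longleftrightarrow> i = i' \<and> j = j'"
proof -
  have inj: "inj_on (\<lambda>(i, j). \<rho> i j) ({..<t} \<times> {..<2})"
    using assms(1) unfolding cyc2_embedding_def by blast
  show "\<rho> i j \<in> auts V E" using assms unfolding cyc2_embedding_def by blast
  show "\<rho> i j \<circ> \<rho> i' j' = \<rho> ((i + i') mod t) ((j + j') mod 2)" if "i' < t" "j' < 2"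
    using assms that unfolding cyc2_embedding_def by blast
  show "\<rho> i j = \<rho> i' j' \<longleftrightarrow> i = i' \<and> j = j'" if "i' < t" "j' < 2"
    using inj_onD[OF inj, of "(i, j)" "(i', j')"] assms(2,3) that by auto
qed

lemma cyc2_embedding_zero:
  assumes "cyc2_embedding V E t \<rho>" "t > 0"
  shows "\<rho> 0 0 = id"
  using cyc2_embeddingD(1)[OF assms(1) assms(2), where j = 0]
    cyc2_embeddingD(2)[OF assms(1) assms(2), where j = 0 and i' = 0 and j' = 0] assms(2)
  by (intro auts_idempotent_eq_id) simp_all

lemma finite_Pstar_cyc:
  assumes "t > 0"
  shows "finite (Pstar_cyc t \<rho>)"
proof -
  have "{p. prime p \<and> p dvd t} \<subseteq> {..t}" using assms by (auto dest: dvd_imp_le)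
  then have "finite ((\<lambda>p. \<rho> (t div p) 0) ` {p. prime p \<and> p dvd t})"
    by (blast intro: finite_subset)
  moreover have "{\<rho> (t div p) 0 | p. prime p \<and> p dvd t} = (\<lambda>p. \<rho> (t div p) 0) ` {p. prime p \<and> p dvd t}"
    by blast
  ultimately show ?thesis unfolding Pstar_cyc_def by simp
qed

lemma Pstar_cyc_elements:
  assumes "f \<in> Pstar_cyc t \<rho>" "t > 0"
  obtains i j where "f = \<rho> i j" "i < t" "j < 2" "(i, j) \<noteq> (0, 0)"
proof -
  have "t div p < t \<and> t div p \<noteq> 0" if "prime p" "p dvd t" for p
    using that \<open>t > 0\<close> prime_gt_1_nat by (auto simp: dvd_div_eq_0_iff)
  then show ?thesis
    using assms that unfolding Pstar_cyc_def by (cases "odd t") auto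
qed

lemma Pstar_cyc_nontrivial:
  assumes "cyc2_embedding V E t \<rho>" "t > 0" "f \<in> Pstar_cyc t \<rho>"
  shows "f \<in> auts V E" "f \<noteq> id"
proof -
  obtain i j where ij: "f = \<rho> i j" "i < t" "j < 2" "(i, j) \<noteq> (0, 0)"
    using Pstar_cyc_elements[OF assms(3,2)] .
  then show "f \<in> auts V E" using cyc2_embeddingD(1)[OF assms(1)] by blast
  show "f \<noteq> id"
    using ij cyc2_embeddingD(3)[OF assms(1) ij(2,3), of 0 0] cyc2_embedding_zero[OF assms(1,2)] assms(2)
    by auto
qed

lemma preserves_nontrivial_imp_preserves_Pstar:
  assumes emb: "cyc2_embedding V E t \<rho>" and "t > 0" "i < t" "j < 2" "(i, j) \<noteq> (0, 0)"
    and "preserves V (\<rho> i j) \<phi>"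
  shows "\<exists>f\<in>Pstar_cyc t \<rho>. preserves V f \<phi>"
proof -
  define S where "S i j \<longleftrightarrow> preserves V (\<rho> i j) \<phi>" for i j
  have closed: "add_closed_mod t S"
    unfolding add_closed_mod_def
  proof (intro allI impI)
    fix i j i' j' assume "i < t" "j < 2" "i' < t" "j' < 2" "S i j" "S i' j'"
    then have "preserves V (\<rho> i j \<circ> \<rho> i' j') \<phi>"
      using preserves_comp cyc2_embeddingD(1)[OF emb] unfolding S_def by blast
    then show "S ((i + i') mod t) ((j + j') mod 2)"
      unfolding S_def using cyc2_embeddingD(2)[OF emb] \<open>i < t\<close> \<open>j < 2\<close> \<open>i' < t\<close> \<open>j' < 2\<close> by simp
  qed
  have "S 0 0" unfolding S_def using cyc2_embedding_zero[OF emb \<open>t > 0\<close>] preserves_id by simp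
  from add_closed_mod_nontrivial_meets_Pstar[OF \<open>t > 0\<close> closed this, of i j] assms(3-6)
  show ?thesis unfolding S_def Pstar_cyc_def by auto
qed

lemma cyc2_iso_embedding:
  assumes "cyc2_iso V E t \<pi>"
  shows "cyc2_embedding V E t \<pi>"
proof -
  have bij: "bij_betw (\<lambda>(i, j). \<pi> i j) ({..<t} \<times> {..<2}) (auts V E)"
    using assms unfolding cyc2_iso_def by blast
  have "\<pi> i j \<in> auts V E" if "i < t" "j < 2" for i j
    using bij_betw_apply[OF bij, of "(i, j)"] that by simp
  then show ?thesis
    using assms bij_betw_imp_inj_on[OF bij] unfolding cyc2_iso_def cyc2_embedding_def by blast
qed

lemma cyc2_iso_surj:
  assumes "cyc2_iso V E t \<pi>" "f \<in> auts V E"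
  obtains i j where "f = \<pi> i j" "i < t" "j < 2"
proof -
  have "f \<in> (\<lambda>(i, j). \<pi> i j) ` ({..<t} \<times> {..<2})"
    using assms unfolding cyc2_iso_def bij_betw_def by blast
  then show ?thesis using that by auto
qed

lemma cyc2_iso_distinguishing_iff:
  assumes "cyc2_iso V E t \<pi>" "t > 0"
  shows "distinguishing V E \<phi> \<longleftrightarrow> (\<forall>f\<in>Pstar_cyc t \<pi>. \<not> preserves V f \<phi>)"
proof
  assume "distinguishing V E \<phi>"
  then show "\<forall>f\<in>Pstar_cyc t \<pi>. \<not> preserves V f \<phi>"
    using Pstar_cyc_nontrivial[OF cyc2_iso_embedding[OF assms(1)] assms(2)]
    unfolding distinguishing_def by blast
next
  assume avoids: "\<forall>f\<in>Pstar_cyc t \<pi>. \<not> preserves V f \<phi>"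
  show "distinguishing V E \<phi>" unfolding distinguishing_def
  proof (intro ballI impI)
    fix f assume "f \<in> auts V E" "preserves V f \<phi>"
    moreover obtain i j where "f = \<pi> i j" "i < t" "j < 2"
      using cyc2_iso_surj[OF assms(1) \<open>f \<in> auts V E\<close>] .
    ultimately show "f = id"
      using preserves_nontrivial_imp_preserves_Pstar[OF cyc2_iso_embedding[OF assms(1)] assms(2)]
        cyc2_embedding_zero[OF cyc2_iso_embedding[OF assms(1)] assms(2)] avoids
      by blast
  qed
qed

lemma Lcount_cyc2_iso:
  assumes "is_graph V E" "cyc2_iso V E t \<pi>" "t > 0"
  shows "int (Lcount V E k) = (\<Sum>P \<in> Pow (Pstar_cyc t \<pi>). (-1) ^ card P * int (Nge V k P))"
  unfolding Lcount_def Nge_def cyc2_iso_distinguishing_iff[OF assms(2,3)]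
  by (rule inclusion_exclusion_avoiding[OF finite_labelings[OF assms(1)] finite_Pstar_cyc[OF assms(3)]])

subsection \<open>The dihedral case\<close>

lemma dih2_isoD:
  assumes "dih2_iso V E t \<pi>" "i < t" "j < 2"
  shows "\<pi> a i j \<in> auts V E"
    and "i' < t \<Longrightarrow> j' < 2 \<Longrightarrow> \<pi> a i j = \<pi> a' i' j' \<longleftrightarrow> a = a' \<and> i = i' \<and> j = j'"
    and "i' < t \<Longrightarrow> j' < 2 \<Longrightarrow>
      \<pi> a i j \<circ> \<pi> a' i' j' = \<pi> (a \<noteq> a') (((if a' then t - i else i) + i') mod t) ((j + j') mod 2)"
proof -
  have bij: "bij_betw (\<lambda>(a, i, j). \<pi> a i j) (UNIV \<times> {..<t} \<times> {..<2}) (auts V E)"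
    using assms(1) unfolding dih2_iso_def by blast
  show "\<pi> a i j \<in> auts V E"
    using bij_betw_apply[OF bij, of "(a, i, j)"] assms(2,3) by simp
  show "\<pi> a i j = \<pi> a' i' j' \<longleftrightarrow> a = a' \<and> i = i' \<and> j = j'" if "i' < t" "j' < 2"
    using inj_onD[OF bij_betw_imp_inj_on[OF bij], of "(a, i, j)" "(a', i', j')"] assms(2,3) that
    by auto
  show "\<pi> a i j \<circ> \<pi> a' i' j' = \<pi> (a \<noteq> a') (((if a' then t - i else i) + i') mod t) ((j + j') mod 2)"
    if "i' < t" "j' < 2"
    using assms that unfolding dih2_iso_def by blast
qed

lemma dih2_iso_surj:
  assumes "dih2_iso V E t \<pi>" "f \<in> auts V E"
  obtains a i j where "f = \<pi> a i j" "i < t" "j < 2"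
proof -
  have "f \<in> (\<lambda>(a, i, j). \<pi> a i j) ` (UNIV \<times> {..<t} \<times> {..<2})"
    using assms unfolding dih2_iso_def bij_betw_def by blast
  then show ?thesis using that by auto
qed

lemma dih2_iso_rotation_embedding:
  assumes "dih2_iso V E t \<pi>"
  shows "cyc2_embedding V E t (\<pi> False)"
  unfolding cyc2_embedding_def
  using dih2_isoD[OF assms] by (auto intro!: inj_onI)

lemma dih2_iso_rotation_zero:
  assumes "dih2_iso V E t \<pi>" "t > 0"
  shows "\<pi> False 0 0 = id"
  using cyc2_embedding_zero[OF dih2_iso_rotation_embedding[OF assms(1)] assms(2)] .

lemma dih2_iso_reflection_ne_id:
  assumes "dih2_iso V E t \<pi>" "t > 0" "i < t" "b < 2"
  shows "\<pi> True i b \<noteq> id"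
  using dih2_isoD(2)[OF assms(1,3,4), where a = True and a' = False and i' = 0 and j' = 0] assms(2)
    dih2_iso_rotation_zero[OF assms(1,2)]
  by auto

lemma dih2_iso_reflection_pairs_inj:
  assumes iso: "dih2_iso V E t \<pi>" and "t > 0"
  shows "inj_on (\<lambda>(b, i). {id, \<pi> True i b}) ({..<2} \<times> {..<t})"
proof (rule inj_onI, clarsimp)
  fix b i b' i' :: nat
  assume "b < 2" "i < t" "b' < 2" "i' < t" "{id, \<pi> True i b} = {id, \<pi> True i' b'}"
  then have "\<pi> True i b = \<pi> True i' b'"
    using dih2_iso_reflection_ne_id[OF iso \<open>t > 0\<close>] by (metis doubleton_eq_iff)
  then show "b = b' \<and> i = i'" using dih2_isoD(2)[OF iso \<open>i < t\<close> \<open>b < 2\<close>] \<open>b' < 2\<close> \<open>i' < t\<close> by blast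
qed

lemma dih2_iso_avoids_Pstar_rotation:
  assumes iso: "dih2_iso V E t \<pi>" and "t > 0"
    and avoids: "\<forall>f\<in>Pstar_dih t \<pi>. \<not> preserves V f \<phi>"
    and "i < t" "j < 2" "preserves V (\<pi> False i j) \<phi>"
  shows "i = 0 \<and> j = 0"
proof (rule ccontr)
  assume "\<not> (i = 0 \<and> j = 0)"
  then obtain f where "f \<in> Pstar_cyc t (\<pi> False)" "preserves V f \<phi>"
    using preserves_nontrivial_imp_preserves_Pstar[OF dih2_iso_rotation_embedding[OF iso] \<open>t > 0\<close>
        assms(4,5) _ assms(6)]
    by auto
  then show False using avoids unfolding Pstar_dih_def by blast
qed

lemma dih2_iso_avoids_Pstar_reflection_unique:
  assumes iso: "dih2_iso V E t \<pi>" and "t > 0"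
    and avoids: "\<forall>f\<in>Pstar_dih t \<pi>. \<not> preserves V f \<phi>"
    and "i < t" "b < 2" "i' < t" "b' < 2"
    and "preserves V (\<pi> True i b) \<phi>" "preserves V (\<pi> True i' b') \<phi>"
  shows "i' = i \<and> b' = b"
proof -
  have "preserves V (\<pi> True i' b' \<circ> \<pi> True i b) \<phi>"
    using preserves_comp[OF assms(9,8) dih2_isoD(1)[OF iso \<open>i < t\<close> \<open>b < 2\<close>]] .
  moreover have "\<pi> True i' b' \<circ> \<pi> True i b = \<pi> False ((t - i' + i) mod t) ((b' + b) mod 2)"
    using dih2_isoD(3)[OF iso \<open>i' < t\<close> \<open>b' < 2\<close> \<open>i < t\<close> \<open>b < 2\<close>] by simp
  ultimately have "(t - i' + i) mod t = 0" "(b' + b) mod 2 = 0"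
    using dih2_iso_avoids_Pstar_rotation[OF iso \<open>t > 0\<close> avoids, of "(t - i' + i) mod t" "(b' + b) mod 2"]
      \<open>t > 0\<close>
    by simp_all
  then show ?thesis
    using mod_neg_add_eq_0_iff \<open>i < t\<close> \<open>i' < t\<close> \<open>b < 2\<close> \<open>b' < 2\<close> by (auto simp: less_2_cases_iff)
qed

lemma dih2_iso_stabilizer_reflection:
  assumes iso: "dih2_iso V E t \<pi>" and "t > 0" "i < t" "b < 2"
    and refl: "preserves V (\<pi> True i b) \<phi>"
    and avoids: "\<forall>f\<in>Pstar_dih t \<pi>. \<not> preserves V f \<phi>"
  shows "stabilizer V E \<phi> = {id, \<pi> True i b}"
proof
  show "stabilizer V E \<phi> \<subseteq> {id, \<pi> True i b}"
  proof
    fix f assume f: "f \<in> stabilizer V E \<phi>"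
    then obtain a i' j' where f_eq: "f = \<pi> a i' j'" and "i' < t" "j' < 2"
      using dih2_iso_surj[OF iso] unfolding stabilizer_def by blast
    show "f \<in> {id, \<pi> True i b}"
    proof (cases a)
      case False
      then show ?thesis
        using dih2_iso_avoids_Pstar_rotation[OF iso \<open>t > 0\<close> avoids \<open>i' < t\<close> \<open>j' < 2\<close>] f f_eq
          dih2_iso_rotation_zero[OF iso \<open>t > 0\<close>]
        unfolding stabilizer_def by auto
    next
      case True
      then show ?thesis
        using dih2_iso_avoids_Pstar_reflection_unique[OF iso \<open>t > 0\<close> avoids \<open>i < t\<close> \<open>b < 2\<close>
            \<open>i' < t\<close> \<open>j' < 2\<close> refl] f f_eq
        unfolding stabilizer_def by auto
    qed
  qed
  show "{id, \<pi> True i b} \<subseteq> stabilizer V E \<phi>"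
    using id_in_auts preserves_id dih2_isoD(1)[OF iso \<open>i < t\<close> \<open>b < 2\<close>] refl
    unfolding stabilizer_def by blast
qed

lemma dih2_iso_avoids_Pstar_iff:
  assumes iso: "dih2_iso V E t \<pi>" and "t > 0"
  shows "(\<forall>f\<in>Pstar_dih t \<pi>. \<not> preserves V f \<phi>) \<longleftrightarrow>
    stabilizer V E \<phi> = {id} \<or> (\<exists>b<2. \<exists>i<t. stabilizer V E \<phi> = {id, \<pi> True i b})"
proof
  assume avoids: "\<forall>f\<in>Pstar_dih t \<pi>. \<not> preserves V f \<phi>"
  show "stabilizer V E \<phi> = {id} \<or> (\<exists>b<2. \<exists>i<t. stabilizer V E \<phi> = {id, \<pi> True i b})"
  proof (cases "\<exists>b<2. \<exists>i<t. preserves V (\<pi> True i b) \<phi>")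
    case True
    then show ?thesis using dih2_iso_stabilizer_reflection[OF iso \<open>t > 0\<close> _ _ _ avoids] by blast
  next
    case False
    have "f = id" if stab: "f \<in> stabilizer V E \<phi>" for f
    proof -
      obtain a i j where f: "f = \<pi> a i j" "i < t" "j < 2"
        using dih2_iso_surj[OF iso] stab unfolding stabilizer_def by blast
      then have "\<not> a" using False stab unfolding stabilizer_def by (cases a) auto
      then show "f = id"
        using f stab dih2_iso_avoids_Pstar_rotation[OF iso \<open>t > 0\<close> avoids, of i j]
          dih2_iso_rotation_zero[OF iso \<open>t > 0\<close>]
        unfolding stabilizer_def by auto
    qed
    then show ?thesis using id_in_auts preserves_id unfolding stabilizer_def by blast
  qed
next
  assume stab: "stabilizer V E \<phi> = {id} \<or> (\<exists>b<2. \<exists>i<t. stabilizer V E \<phi> = {id, \<pi> True i b})"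
  show "\<forall>f\<in>Pstar_dih t \<pi>. \<not> preserves V f \<phi>"
  proof (intro ballI notI)
    fix f assume f: "f \<in> Pstar_dih t \<pi>" "preserves V f \<phi>"
    then obtain i' j' where rotation: "f = \<pi> False i' j'" "i' < t" "j' < 2"
      using Pstar_cyc_elements \<open>t > 0\<close> unfolding Pstar_dih_def by metis
    have "f \<in> stabilizer V E \<phi>" "f \<noteq> id"
      using f Pstar_cyc_nontrivial[OF dih2_iso_rotation_embedding[OF iso] \<open>t > 0\<close>]
      unfolding stabilizer_def Pstar_dih_def by auto
    with stab obtain b i where "b < 2" "i < t" "f = \<pi> True i b" by blast
    then show False using rotation dih2_isoD(2)[OF iso] by blast
  qed
qed

lemma dih2_iso_Neq_reflection:
  assumes graph: "is_graph V E" and iso: "dih2_iso V E t \<pi>" and "t > 0" "i < t" "b < 2"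
  shows "int (Neq V E k {\<pi> False 0 0, \<pi> True i b}) =
    (\<Sum>P\<in>{P. {\<pi> True i b} \<subseteq> P \<and> P \<subseteq> {\<pi> True i b} \<union> Pstar_dih t \<pi>}.
       (-1) ^ (card P - 1) * int (Nge V k P))"
proof -
  define g where "g = \<pi> True i b"
  define S where "S = Pstar_dih t \<pi>"
  define A where "A = {\<phi> \<in> labelings V k. preserves V g \<phi>}"
  have "finite S" unfolding S_def Pstar_dih_def using finite_Pstar_cyc[OF \<open>t > 0\<close>] .
  have "g \<notin> S"
  proof
    assume "g \<in> S"
    then obtain i' j' where "g = \<pi> False i' j'" "i' < t" "j' < 2"
      using Pstar_cyc_elements \<open>t > 0\<close> unfolding S_def Pstar_dih_def by metis
    then show False using dih2_isoD(2)[OF iso \<open>i < t\<close> \<open>b < 2\<close>] unfolding g_def by blast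
  qed
  have "(\<Sum>P\<in>{P. {g} \<subseteq> P \<and> P \<subseteq> {g} \<union> S}. (-1) ^ (card P - 1) * int (Nge V k P))
      = (\<Sum>Q\<in>Pow S. (-1) ^ card Q * int (card {\<phi>\<in>A. \<forall>f\<in>Q. preserves V f \<phi>}))"
    unfolding sum_supersets_insert[OF \<open>g \<notin> S\<close>]
  proof (rule sum.cong)
    fix Q assume "Q \<in> Pow S"
    then have "finite Q" "g \<notin> Q" using \<open>finite S\<close> \<open>g \<notin> S\<close> finite_subset by auto
    then have "card (insert g Q) - 1 = card Q" by simp
    moreover have "Nge V k (insert g Q) = card {\<phi>\<in>A. \<forall>f\<in>Q. preserves V f \<phi>}"
      unfolding Nge_def A_def by (rule arg_cong[where f = card]) auto
    ultimately show "(-1) ^ (card (insert g Q) - 1) * int (Nge V k (insert g Q))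
        = (-1) ^ card Q * int (card {\<phi>\<in>A. \<forall>f\<in>Q. preserves V f \<phi>})" by simp
  qed simp
  also have "\<dots> = int (card {\<phi>\<in>A. \<forall>f\<in>S. \<not> preserves V f \<phi>})"
    using inclusion_exclusion_avoiding[of A S] finite_labelings[OF graph] \<open>finite S\<close>
    unfolding A_def by simp
  also have "{\<phi>\<in>A. \<forall>f\<in>S. \<not> preserves V f \<phi>} = {\<phi> \<in> labelings V k. stabilizer V E \<phi> = {id, g}}"
  proof -
    have "preserves V g \<phi> \<and> (\<forall>f\<in>S. \<not> preserves V f \<phi>) \<longleftrightarrow> stabilizer V E \<phi> = {id, g}" for \<phi>
      using dih2_iso_stabilizer_reflection[OF iso \<open>t > 0\<close> \<open>i < t\<close> \<open>b < 2\<close>, of \<phi>]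
        dih2_iso_avoids_Pstar_iff[OF iso \<open>t > 0\<close>, of \<phi>] \<open>i < t\<close> \<open>b < 2\<close>
      unfolding g_def S_def stabilizer_def by blast
    then show ?thesis unfolding A_def by blast
  qed
  finally show ?thesis
    unfolding Neq_eq_card_stabilizer g_def S_def dih2_iso_rotation_zero[OF iso \<open>t > 0\<close>] by simp
qed

lemma dih2_iso_Lcount:
  assumes graph: "is_graph V E" and iso: "dih2_iso V E t \<pi>" and "t > 0"
  shows "int (Lcount V E k) =
    (\<Sum>P\<in>Pow (Pstar_dih t \<pi>). (-1) ^ card P * int (Nge V k P))
    - (\<Sum>b<2. \<Sum>i<t. int (Neq V E k {\<pi> False 0 0, \<pi> True i b}))"
proof -
  define Lab where "Lab = labelings V k"
  define R where "R = (\<lambda>(b, i). {id, \<pi> True i b}) ` ({..<2} \<times> {..<t})"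
  have "finite Lab" unfolding Lab_def using finite_labelings[OF graph] .
  have "{id} \<notin> R"
    using dih2_iso_reflection_ne_id[OF iso \<open>t > 0\<close>] unfolding R_def by fastforce
  note inj = dih2_iso_reflection_pairs_inj[OF iso \<open>t > 0\<close>]
  have "{\<phi> \<in> Lab. \<forall>f\<in>Pstar_dih t \<pi>. \<not> preserves V f \<phi>} = {\<phi> \<in> Lab. stabilizer V E \<phi> \<in> insert {id} R}"
    using dih2_iso_avoids_Pstar_iff[OF iso \<open>t > 0\<close>] unfolding R_def by auto
  then have "card {\<phi> \<in> Lab. \<forall>f\<in>Pstar_dih t \<pi>. \<not> preserves V f \<phi>}
      = (\<Sum>H\<in>insert {id} R. card {\<phi> \<in> Lab. stabilizer V E \<phi> = H})"
    using card_filter_eq_sum_card_fibres[OF \<open>finite Lab\<close>, of "insert {id} R"] unfolding R_def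
    by (simp only: finite_insert finite_imageI finite_cartesian_product finite_lessThan)
  also have "\<dots> = Lcount V E k + (\<Sum>H\<in>R. Neq V E k H)"
    using \<open>{id} \<notin> R\<close> unfolding R_def Lcount_def distinguishing_iff_stabilizer Neq_eq_card_stabilizer Lab_def
    by simp
  also have "(\<Sum>H\<in>R. Neq V E k H) = (\<Sum>b<2. \<Sum>i<t. Neq V E k {id, \<pi> True i b})"
    unfolding R_def sum.reindex[OF inj] by (simp add: sum.cartesian_product prod.case_distrib)
  finally have "int (card {\<phi> \<in> Lab. \<forall>f\<in>Pstar_dih t \<pi>. \<not> preserves V f \<phi>})
      = int (Lcount V E k) + (\<Sum>b<2. \<Sum>i<t. int (Neq V E k {id, \<pi> True i b}))"
    by simp
  moreover have "int (card {\<phi> \<in> Lab. \<forall>f\<in>Pstar_dih t \<pi>. \<not> preserves V f \<phi>})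
      = (\<Sum>P\<in>Pow (Pstar_dih t \<pi>). (-1) ^ card P * int (Nge V k P))"
    unfolding Nge_def Lab_def Pstar_dih_def
    by (rule inclusion_exclusion_avoiding[OF finite_labelings[OF graph] finite_Pstar_cyc[OF \<open>t > 0\<close>]])
  ultimately show ?thesis unfolding dih2_iso_rotation_zero[OF iso \<open>t > 0\<close>] by simp
qed

theorem theorem4:
  fixes V :: "'a set" and E :: "'a \<Rightarrow> 'a \<Rightarrow> bool" and t k :: nat
  assumes "is_graph V E" and "t > 0" and "k > 0"
  shows
    "(\<forall>\<pi>. cyc2_iso V E t \<pi> \<longrightarrow>
        int (Lcount V E k) = (\<Sum>P \<in> Pow (Pstar_cyc t \<pi>). (-1) ^ card P * int (Nge V k P)))
     \<and>
     (\<forall>\<pi>. dih2_iso V E t \<pi> \<longrightarrow>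
        (\<forall>b<2. \<forall>i<t.
           int (Neq V E k {\<pi> False 0 0, \<pi> True i b}) =
             (\<Sum>P \<in> {P. {\<pi> True i b} \<subseteq> P \<and> P \<subseteq> {\<pi> True i b} \<union> Pstar_dih t \<pi>}.
                (-1) ^ (card P - 1) * int (Nge V k P)))
        \<and>
        int (Lcount V E k) =
          (\<Sum>P \<in> Pow (Pstar_dih t \<pi>). (-1) ^ card P * int (Nge V k P))
          - (\<Sum>b<2. \<Sum>i<t. int (Neq V E k {\<pi> False 0 0, \<pi> True i b})))"
  using Lcount_cyc2_iso[OF assms(1) _ assms(2)]
    dih2_iso_Neq_reflection[OF assms(1) _ assms(2)] dih2_iso_Lcount[OF assms(1) _ assms(2)]
  by blast

end
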